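(* Let $\mathfrak L=\mathbb V\oplus\mathbb W$ be a color gLt-algebra admitting a quasi-multiplicative basis $\mathfrak B=\{e_i\}_{i\in I}$ of $\mathbb W\neq 0$. For any $i\in I$, the linear subspace $\mathfrak J_{[i]}=\mathbb V_{[i]}\oplus\mathbb W_{[i]}$ is a color gLt-ideal of $\mathfrak L$ admitting a quasi-multiplicative basis inherited by the one of $\mathfrak L$.
   Context: Let $\mathbb F$ be a field, $\mathbb G$ an abelian group, $n\ge 2$, and $\epsilon:\mathbb G\times\mathbb G\to\mathbb F\setminus\{0\}$ a bicharacter ($\epsilon(k,g+h)=\epsilon(k,g)\epsilon(k,h)$, $\epsilon(g+h,k)=\epsilon(g,k)\epsilon(h,k)$, $\epsilon(g,h)\epsilon(h,g)=1$). A graded $n$-ary algebra is a $\mathbb G$-graded vector space $\mathfrak L=\bigoplus_{g\in\mathbb G}\mathfrak L_g$ with an $n$-linear map $\langle\cdot,\dots,\cdot\rangle:\mathfrak L^n\to\mathfrak L$ such that $\langle\mathfrak L_{g_1},\dots,\mathfrak L_{g_n}\rangle\subset\mathfrak L_{g_1+\dots+g_n}$. For $\sigma\in\mathbb S_n$ write $\langle x_1,\dots,x_n\rangle_\sigma:=\langle x_{\sigma(1)},\dots,x_{\sigma(n)}\rangle$; for subsets $A_1,\dots,A_n$, $\langle A_1,\dots,A_n\rangle_\sigma$ denotes the linear span of all $\langle x_1,\dots,x_n\rangle_\sigma$ with $x_r\in A_r$. A color gLt-algebra is a graded $n$-ary algebra satisfying, for each $k=1,\dots,n$ and fixed scalars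 $\alpha^{\sigma_1,\sigma_2}_{i,j,k}\in\mathbb F$, the color version (each term on the right multiplied by the product of values of $\epsilon$ on the degrees of the homogeneous arguments transposed in passing from the left-hand order to the order of that term) of the identity $\langle y_1,\dots,y_{k-1},\langle x_1,\dots,x_n\rangle,y_k,\dots,y_{n-1}\rangle=\sum_{1\le i,j\le n,\,\sigma_1\in\mathbb S_n,\,\sigma_2\in\mathbb S_{n-1}}\alpha^{\sigma_1,\sigma_2}_{i,j,k}\langle x_{\sigma_1(1)},\dots,x_{\sigma_1(i-1)},\langle y_{\sigma_2(1)},\dots,y_{\sigma_2(j-1)},x_{\sigma_1(i)},y_{\sigma_2(j)},\dots,y_{\sigma_2(n-1)}\rangle,x_{\sigma_1(i+1)},\dots,x_{\sigma_1(n)}\rangle$. A $\mathbb G$-graded subspace $\mathcal I\subset\mathfrak L$ is a color gLt-ideal if $\langle\mathcal I,\mathfrak L,\dots,\mathfrak L\rangle_\sigma\subset\mathcal I$ for every $\sigma\in\mathbb S_n$. $\mathfrak L$ admits a quasi-multiplicative basis if $\mathfrak L=\mathbb V\oplus\mathbb W$ with $\mathbb V$, $\mathbb W\ne0$ graded subspaces and $\mathfrak B=\{e_i\}_{i\in I}$ a basis of homogeneous elements of $\mathbb W$ such that: (1) for $i_1,\dots,i_n\in I$, either $\langle e_{i_1},\dots,e_{i_n}\rangle\in\mathbb Fe_j$ for some $j\in I$ or $\langle e_{i_1},\dots,e_{i_n}\rangle\in\mathbb V$; (2) for $0<k<n$, $i_1,\dots,i_k\in I$ and $\sigma\in\mathbb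 S_n$, $\langle e_{i_1},\dots,e_{i_k},\mathbb V,\dots,\mathbb V\rangle_\sigma\subset\mathbb Fe_{j_\sigma}$ for some $j_\sigma\in I$; (3) either $\langle\mathbb V,\dots,\mathbb V\rangle\subset\mathbb Fe_j$ for some $j\in I$ or $\langle\mathbb V,\dots,\mathbb V\rangle\subset\mathbb V$. A graded subalgebra (or ideal) $\mathfrak S$ has a quasi-multiplicative basis inherited by the one of $\mathfrak L$ if $\mathfrak S=\mathbb V_{\mathfrak S}\oplus\mathbb W_{\mathfrak S}$ with $\mathbb V_{\mathfrak S}$ a graded subspace of $\mathbb V$ and $0\ne\mathbb W_{\mathfrak S}$ a graded subspace of $\mathbb W$ admitting a subset $\mathfrak B'\subset\mathfrak B$ as a basis. Index maps: let $v$ be a symbol not in $I$, $\mathfrak I:=I\,\dot\cup\,\{v\}$; for each $j\in\mathfrak I$ take a new symbol $\overline j$, $\overline I:=\{\overline i:i\in I\}$, $\overline{\mathfrak I}:=\overline I\,\dot\cup\,\{\overline v\}$; set $\overline{(\overline j)}:=j$, $\overline J:=\{\overline j:j\in J\}$ for a set $J$ of symbols ($\overline\emptyset=\emptyset$). Put $u_j:=e_j$ for $j\in I$ and $u_v:=\mathbb V$. For $\sigma\in\mathbb S_n$ and $(j_1,\dots,j_n)\in\mathfrak I^n$ let $a_\sigma(j_1,\dots,j_n)=\{r\}$ if $r\in I$ and $0\ne\langle u_{j_1},\dots,u_{j_n}\rangle_\sigma\subset\mathbb Fe_r$, $=\{v\}$ if $0\ne\langle u_{j_1},\dots,u_{j_n}\rangle_\sigma\subset\mathbb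 V$, and $=\emptyset$ otherwise. For $j,j_2,\dots,j_n\in\mathfrak I$ let $b_\sigma(j,\overline j_2,\dots,\overline j_n):=\{x\in\mathfrak I: a_\sigma(x,j_2,\dots,j_n)=\{j\}\}$. Define $\mu$ on $(\mathfrak I\,\dot\cup\,\overline{\mathfrak I})\times(\mathfrak I^{n-1}\,\dot\cup\,\overline{\mathfrak I}^{n-1})$ with values subsets of $\mathfrak I$ by: $\mu(j,j_1,\dots,j_{n-1})=\bigcup_{\sigma\in\mathbb S_n}a_\sigma(j,j_1,\dots,j_{n-1})$ for $j,j_1,\dots,j_{n-1}\in\mathfrak I$; $\mu(j,\overline j_1,\dots,\overline j_{n-1})=\bigcup_{\sigma\in\mathbb S_n}b_\sigma(j,\overline j_1,\dots,\overline j_{n-1})$ for $j,j_1,\dots,j_{n-1}\in\mathfrak I$; $\mu(\overline j,j_1,\dots,j_{n-1})=\bigcup_{1\le k\le n-1,\ \sigma\in\mathbb S_n}b_\sigma(j_k,\overline j,\overline j_1,\dots,\overline j_{k-1},\overline j_{k+1},\dots,\overline j_{n-1})$ for $j,j_1,\dots,j_{n-1}\in\mathfrak I$; and $\mu(\overline j,\overline j_1,\dots,\overline j_{n-1})=\emptyset$. Define $\phi$ on pairs $(J,X)$ with $J\subset I\,\dot\cup\,\overline I$ and $X\in\mathfrak I^{n-1}\,\dot\cup\,\overline{\mathfrak I}^{n-1}$ by $\phi(\emptyset,X)=\emptyset$ and, for $J\ne\emptyset$, $\phi(J,X):=K\cup\overline K$ where $K:=\big(\bigcup_{j\in J}\mu(j,X)\big)\setminus\{v\}$.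 Connections: for distinct $i,j\in I$, $i$ is connected to $j$ if there exist $t\ge1$, $X_1,\dots,X_t\in\mathfrak I^{n-1}\,\dot\cup\,\overline{\mathfrak I}^{n-1}$ and $\widetilde i\in\{i,\overline i\}$ such that $\phi(\{\widetilde i\},X_1)\ne\emptyset$, …, $\phi(\cdots\phi(\{\widetilde i\},X_1)\cdots,X_{t-1})\ne\emptyset$, and $j\in\phi(\cdots\phi(\phi(\{\widetilde i\},X_1),X_2)\cdots,X_t)$; every $i$ is connected to itself. Being connected is an equivalence relation $\sim$ on $I$; $[i]$ denotes the class of $i$. Define $\mathbb V_{[i]}:=\big(\sum_{i_1,\dots,i_n\in[i]}\mathbb F\langle e_{i_1},\dots,e_{i_n}\rangle\big)\cap\mathbb V$, $\mathbb W_{[i]}:=\bigoplus_{j\in[i]}\mathbb Fe_j$, and $\mathfrak J_{[i]}:=\mathbb V_{[i]}\oplus\mathbb W_{[i]}$. *)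

theory Defs
  imports Complex_Main "HOL-Combinatorics.Permutations"
begin

definition perms :: "nat \<Rightarrow> (nat \<Rightarrow> nat) set" where
  "perms m = {\<sigma>. \<sigma> permutes {0..<m}}"

definition line :: "('f::field \<Rightarrow> 'v::ab_group_add \<Rightarrow> 'v) \<Rightarrow> 'v \<Rightarrow> 'v set" where
  "line scale x = range (\<lambda>c. scale c x)"

definition setsum :: "'v::ab_group_add set \<Rightarrow> 'v set \<Rightarrow> 'v set" where
  "setsum A B = {a + b | a b. a \<in> A \<and> b \<in> B}"

text \<open>Bracket of subsets: span of all products of the permuted arguments (the paper's
  \<open>\<langle>A_1,\<dots>,A_n\<rangle>_\<sigma>\<close>); the product is a map on lists of length n.\<close>
definition brk :: "('f::field \<Rightarrow> 'v::ab_group_add \<Rightarrow> 'v) \<Rightarrow> ('v list \<Rightarrow> 'v) \<Rightarrow> nat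
    \<Rightarrow> (nat \<Rightarrow> nat) \<Rightarrow> 'v set list \<Rightarrow> 'v set" where
  "brk scale mul n \<sigma> As = module.span scale
     {mul (map (\<lambda>r. xs ! \<sigma> r) [0..<n]) | xs. length xs = n \<and> (\<forall>r<n. xs ! r \<in> As ! r)}"

definition graded_space :: "('f::field \<Rightarrow> 'v::ab_group_add \<Rightarrow> 'v) \<Rightarrow> ('g \<Rightarrow> 'v set) \<Rightarrow> bool" where
  "graded_space scale Lg \<longleftrightarrow>
     (\<forall>g. module.subspace scale (Lg g)) \<and>
     module.span scale (\<Union>g. Lg g) = UNIV \<and>
     (\<forall>D f. finite D \<and> (\<forall>g\<in>D. f g \<in> Lg g) \<and> sum f D = 0 \<longrightarrow> (\<forall>g\<in>D. f g = 0))"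

definition graded_subspace :: "('f::field \<Rightarrow> 'v::ab_group_add \<Rightarrow> 'v) \<Rightarrow> ('g \<Rightarrow> 'v set) \<Rightarrow> 'v set \<Rightarrow> bool" where
  "graded_subspace scale Lg S \<longleftrightarrow>
     module.subspace scale S \<and> S \<subseteq> module.span scale (\<Union>g. S \<inter> Lg g)"

definition multilinear :: "('f::field \<Rightarrow> 'v::ab_group_add \<Rightarrow> 'v) \<Rightarrow> nat \<Rightarrow> ('v list \<Rightarrow> 'v) \<Rightarrow> bool" where
  "multilinear scale n mul \<longleftrightarrow>
     (\<forall>xs r. length xs = n \<and> r < n \<longrightarrow> Vector_Spaces.linear scale scale (\<lambda>x. mul (xs[r := x])))"

definition graded_nary_algebra :: "('f::field \<Rightarrow> 'v::ab_group_add \<Rightarrow> 'v) \<Rightarrow> ('g::ab_group_add \<Rightarrow> 'v set)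
    \<Rightarrow> nat \<Rightarrow> ('v list \<Rightarrow> 'v) \<Rightarrow> bool" where
  "graded_nary_algebra scale Lg n mul \<longleftrightarrow>
     graded_space scale Lg \<and> multilinear scale n mul \<and>
     (\<forall>xs gs. length xs = n \<and> length gs = n \<and> (\<forall>r<n. xs ! r \<in> Lg (gs ! r))
         \<longrightarrow> mul xs \<in> Lg (sum_list gs))"

definition bicharacter :: "('g::ab_group_add \<Rightarrow> 'g \<Rightarrow> 'f::field) \<Rightarrow> bool" where
  "bicharacter eps \<longleftrightarrow>
     (\<forall>g h. eps g h \<noteq> 0) \<and>
     (\<forall>k g h. eps k (g + h) = eps k g * eps k h) \<and>
     (\<forall>g h k. eps (g + h) k = eps g k * eps h k) \<and>
     (\<forall>g h. eps g h * eps h g = 1)"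

text \<open>ds: degrees of the 2n-1 arguments in the left-hand order; ord: the order of the
  arguments in a right-hand term, given as a list of left-hand positions.\<close>
definition color_factor :: "('g \<Rightarrow> 'g \<Rightarrow> 'f::field) \<Rightarrow> 'g list \<Rightarrow> nat list \<Rightarrow> 'f" where
  "color_factor eps ds ord =
     (\<Prod>(a, b) \<in> {(a, b). a < b \<and> b < length ds \<and>
                     (\<exists>p q. p < q \<and> q < length ord \<and> ord ! p = b \<and> ord ! q = a)}.
        eps (ds ! a) (ds ! b))"

text \<open>Positions (0-based) in the left-hand order y_1..y_{k-1}, x_1..x_n, y_k..y_{n-1}.\<close>
definition posx :: "nat \<Rightarrow> nat \<Rightarrow> nat" where "posx k s = k - 1 + s"
definition posy :: "nat \<Rightarrow> nat \<Rightarrow> nat \<Rightarrow> nat" where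
  "posy n k r = (if r < k - 1 then r else r + n)"

text \<open>i, j, k are 1-based as in the paper; permutations act on 0-based positions.\<close>
definition rhs_order :: "nat \<Rightarrow> nat \<Rightarrow> nat \<Rightarrow> nat \<Rightarrow> (nat \<Rightarrow> nat) \<Rightarrow> (nat \<Rightarrow> nat) \<Rightarrow> nat list" where
  "rhs_order n k i j \<sigma>1 \<sigma>2 =
     map (\<lambda>r. posx k (\<sigma>1 r)) [0..<i-1] @
     map (\<lambda>r. posy n k (\<sigma>2 r)) [0..<j-1] @ [posx k (\<sigma>1 (i-1))] @
     map (\<lambda>r. posy n k (\<sigma>2 r)) [j-1..<n-1] @
     map (\<lambda>r. posx k (\<sigma>1 r)) [i..<n]"

definition rhs_term :: "('v list \<Rightarrow> 'v) \<Rightarrow> nat \<Rightarrow> 'v list \<Rightarrow> 'v list \<Rightarrow> nat \<Rightarrow> nat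
    \<Rightarrow> (nat \<Rightarrow> nat) \<Rightarrow> (nat \<Rightarrow> nat) \<Rightarrow> 'v" where
  "rhs_term mul n xs ys i j \<sigma>1 \<sigma>2 =
     mul (map (\<lambda>r. xs ! \<sigma>1 r) [0..<i-1] @
           [mul (map (\<lambda>r. ys ! \<sigma>2 r) [0..<j-1] @ [xs ! \<sigma>1 (i-1)] @
                  map (\<lambda>r. ys ! \<sigma>2 r) [j-1..<n-1])] @
           map (\<lambda>r. xs ! \<sigma>1 r) [i..<n])"

definition color_gLt_identity :: "('f::field \<Rightarrow> 'v::ab_group_add \<Rightarrow> 'v) \<Rightarrow> ('g::ab_group_add \<Rightarrow> 'v set)
    \<Rightarrow> nat \<Rightarrow> ('v list \<Rightarrow> 'v) \<Rightarrow> ('g \<Rightarrow> 'g \<Rightarrow> 'f)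
    \<Rightarrow> (nat \<Rightarrow> nat \<Rightarrow> nat \<Rightarrow> (nat \<Rightarrow> nat) \<Rightarrow> (nat \<Rightarrow> nat) \<Rightarrow> 'f) \<Rightarrow> bool" where
  "color_gLt_identity scale Lg n mul eps alpha \<longleftrightarrow>
     (\<forall>k\<in>{1..n}. \<forall>xs ys gx gy.
        length xs = n \<and> length ys = n - 1 \<and> length gx = n \<and> length gy = n - 1 \<and>
        (\<forall>r<n. xs ! r \<in> Lg (gx ! r)) \<and> (\<forall>r<n-1. ys ! r \<in> Lg (gy ! r)) \<longrightarrow>
        mul (take (k-1) ys @ [mul xs] @ drop (k-1) ys) =
        (\<Sum>i\<in>{1..n}. \<Sum>j\<in>{1..n}. \<Sum>\<sigma>1\<in>perms n. \<Sum>\<sigma>2\<in>perms (n-1).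
           scale (alpha i j k \<sigma>1 \<sigma>2 *
                  color_factor eps (take (k-1) gy @ gx @ drop (k-1) gy) (rhs_order n k i j \<sigma>1 \<sigma>2))
                 (rhs_term mul n xs ys i j \<sigma>1 \<sigma>2)))"

definition color_gLt_algebra where
  "color_gLt_algebra scale Lg n mul eps alpha \<longleftrightarrow>
     graded_nary_algebra scale Lg n mul \<and> color_gLt_identity scale Lg n mul eps alpha"

definition color_gLt_ideal :: "('f::field \<Rightarrow> 'v::ab_group_add \<Rightarrow> 'v) \<Rightarrow> ('g \<Rightarrow> 'v set)
    \<Rightarrow> nat \<Rightarrow> ('v list \<Rightarrow> 'v) \<Rightarrow> 'v set \<Rightarrow> bool" where
  "color_gLt_ideal scale Lg n mul S \<longleftrightarrow>
     graded_subspace scale Lg S \<and>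
     (\<forall>\<sigma>\<in>perms n. brk scale mul n \<sigma> (S # replicate (n - 1) UNIV) \<subseteq> S)"

definition qm_basis :: "('f::field \<Rightarrow> 'v::ab_group_add \<Rightarrow> 'v) \<Rightarrow> ('g \<Rightarrow> 'v set)
    \<Rightarrow> nat \<Rightarrow> ('v list \<Rightarrow> 'v) \<Rightarrow> 'v set \<Rightarrow> 'v set \<Rightarrow> 'i set \<Rightarrow> ('i \<Rightarrow> 'v) \<Rightarrow> bool" where
  "qm_basis scale Lg n mul V W I e \<longleftrightarrow>
     graded_subspace scale Lg V \<and> graded_subspace scale Lg W \<and> W \<noteq> {0} \<and>
     V \<inter> W = {0} \<and> setsum V W = UNIV \<and>
     inj_on e I \<and> module.independent scale (e ` I) \<and> module.span scale (e ` I) = W \<and>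
     (\<forall>i\<in>I. \<exists>g. e i \<in> Lg g) \<and>
     (\<forall>is. length is = n \<and> set is \<subseteq> I \<longrightarrow>
        (\<exists>j\<in>I. mul (map e is) \<in> line scale (e j)) \<or> mul (map e is) \<in> V) \<and>
     (\<forall>k is \<sigma>. 0 < k \<and> k < n \<and> length is = k \<and> set is \<subseteq> I \<and> \<sigma> \<in> perms n \<longrightarrow>
        (\<exists>j\<in>I. brk scale mul n \<sigma> (map (\<lambda>i. {e i}) is @ replicate (n - k) V) \<subseteq> line scale (e j))) \<and>
     ((\<exists>j\<in>I. brk scale mul n id (replicate n V) \<subseteq> line scale (e j)) \<or>
      brk scale mul n id (replicate n V) \<subseteq> V)"

definition inherited_qmb :: "('f::field \<Rightarrow> 'v::ab_group_add \<Rightarrow> 'v) \<Rightarrow> ('g \<Rightarrow> 'v set)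
    \<Rightarrow> 'v set \<Rightarrow> 'v set \<Rightarrow> 'i set \<Rightarrow> ('i \<Rightarrow> 'v) \<Rightarrow> 'v set \<Rightarrow> bool" where
  "inherited_qmb scale Lg V W I e S \<longleftrightarrow>
     (\<exists>VS WS I'. graded_subspace scale Lg VS \<and> VS \<subseteq> V \<and>
        graded_subspace scale Lg WS \<and> WS \<subseteq> W \<and> WS \<noteq> {0} \<and>
        I' \<subseteq> I \<and> module.independent scale (e ` I') \<and> module.span scale (e ` I') = WS \<and>
        VS \<inter> WS = {0} \<and> S = setsum VS WS)"

text \<open>The symbols of the paper: Pos j for j, Bar j for the barred symbol; the option type
  realises \<open>\<frak>I = I \<union> {v}\<close> with None = v. Tuples X in \<open>\<frak>I^{n-1} \<union> \<bar>\<frak>I^{n-1}\<close>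
  are pairs (barred?, list of length n-1).\<close>
datatype 'i sym = Pos "'i option" | Bar "'i option"

definition Jset :: "'i set \<Rightarrow> 'i option set" where
  "Jset I = insert None (Some ` I)"

definition uset :: "'v set \<Rightarrow> ('i \<Rightarrow> 'v) \<Rightarrow> 'i option \<Rightarrow> 'v set" where
  "uset V e j = (case j of None \<Rightarrow> V | Some i \<Rightarrow> {e i})"

definition amap where
  "amap scale mul n V I e \<sigma> js =
     (let S = brk scale mul n \<sigma> (map (uset V e) js) in
        {Some r | r. r \<in> I \<and> S \<noteq> {0} \<and> S \<subseteq> line scale (e r)} \<union>
        (if S \<noteq> {0} \<and> S \<subseteq> V then {None} else {}))"

definition bmap where
  "bmap scale mul n V I e \<sigma> j js = {x \<in> Jset I. amap scale mul n V I e \<sigma> (x # js) = {j}}"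

definition mu where
  "mu scale mul n V I e jj X = (case (jj, X) of
      (Pos j, (False, js)) \<Rightarrow> (\<Union>\<sigma>\<in>perms n. amap scale mul n V I e \<sigma> (j # js))
    | (Pos j, (True, js)) \<Rightarrow> (\<Union>\<sigma>\<in>perms n. bmap scale mul n V I e \<sigma> j js)
    | (Bar j, (False, js)) \<Rightarrow> (\<Union>k\<in>{..<n-1}. \<Union>\<sigma>\<in>perms n.
          bmap scale mul n V I e \<sigma> (js ! k) (j # take k js @ drop (Suc k) js))
    | (Bar j, (True, js)) \<Rightarrow> {})"

definition phi where
  "phi scale mul n V I e J X =
     (if J = {} then {} else
       (let K = {i. Some i \<in> (\<Union>jj\<in>J. mu scale mul n V I e jj X)}
        in (Pos \<circ> Some) ` K \<union> (Bar \<circ> Some) ` K))"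

definition connected where
  "connected scale mul n V I e i j \<longleftrightarrow> i \<in> I \<and> j \<in> I \<and>
     (i = j \<or>
      (\<exists>Xs ii. length Xs \<ge> 1 \<and>
         (\<forall>X\<in>set Xs. length (snd X) = n - 1 \<and> set (snd X) \<subseteq> Jset I) \<and>
         ii \<in> {Pos (Some i), Bar (Some i)} \<and>
         (\<forall>s\<in>{1..<length Xs}. foldl (phi scale mul n V I e) {ii} (take s Xs) \<noteq> {}) \<and>
         Pos (Some j) \<in> foldl (phi scale mul n V I e) {ii} Xs))"

definition cls where
  "cls scale mul n V I e i = {j \<in> I. connected scale mul n V I e i j}"

definition Vcls where
  "Vcls scale mul n V I e i =
     module.span scale {mul (map e is) | is. length is = n \<and> set is \<subseteq> cls scale mul n V I e i} \<inter> V"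

definition Wcls where
  "Wcls scale mul n V I e i = module.span scale (e ` cls scale mul n V I e i)"

definition Jcls where
  "Jcls scale mul n V I e i = setsum (Vcls scale mul n V I e i) (Wcls scale mul n V I e i)"

end

theory Submission
  imports Defs
begin

text \<open>
  J_[i] is spanned by the basis vectors e_j, j in [i], together with the products of n such
  basis vectors that lie in V. By multilinearity it suffices to show that a product with one
  spanning vector in some slot and basis vectors, elements of V or homogeneous elements in the
  other slots stays in J_[i]. If the spanning vector is e_j, quasi-multiplicativity puts the
  product in a line F e_r or in V: in the first case r is reached from j by one application of
  mu; in the second, every other basis index of the product is reached from the barred index
  of j. If the spanning vector is a product of basis vectors indexed in [i], the gLt identity
  rewrites the product as a combination of products having some e_j, j in [i], as a direct
  argument, which is the first case.
\<close>

section \<open>Brackets and multilinearity\<close>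

lemma mset_obtain_nth:
  assumes "p < length xs"
  obtains rest where "mset xs = mset (xs ! p # rest)"
proof -
  obtain rest where "mset rest = mset xs - {#xs ! p#}" using ex_mset by blast
  with assms show thesis by (intro that[of rest]) (simp add: insert_DiffM)
qed

lemma mset_obtain_two_nth:
  assumes "p < length xs" "q < length xs" "p \<noteq> q"
  obtains rest where "mset xs = mset (xs ! p # xs ! q # rest)"
proof -
  let ?m = "length xs"
  obtain rest where rest: "mset rest = image_mset (nth xs) (mset_set ({..<?m} - {p, q}))"
    using ex_mset by blast
  have "mset_set {..<?m} = add_mset p (add_mset q (mset_set ({..<?m} - {p, q})))"
    using assms by (simp add: mset_set.remove[of _ p] mset_set.remove[of _ q] Diff_insert2 [symmetric])
  moreover have "mset xs = image_mset (nth xs) (mset_set {..<?m})"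
    by (metis map_nth mset_map mset_upt lessThan_atLeast0)
  ultimately show thesis using rest by (intro that[of rest]) simp
qed

lemma mset_eq_ConsD:
  assumes "mset xs = mset (x # ys)"
  shows "length ys = length xs - 1" "set ys \<subseteq> set xs"
  using mset_eq_length[OF assms] mset_eq_setD[OF assms] by auto

lemma perms_iff_permutes: "\<sigma> \<in> perms n \<longleftrightarrow> \<sigma> permutes {..<n}"
  by (simp add: perms_def atLeast0LessThan)

lemma brk_conv_permute_list:
  assumes "length As = n"
  shows "brk scale mul n \<sigma> As =
    module.span scale {mul (permute_list \<sigma> xs) | xs. list_all2 (\<in>) xs As}"
proof -
  have "{mul (map (\<lambda>r. xs ! \<sigma> r) [0..<n]) | xs. length xs = n \<and> (\<forall>r<n. xs ! r \<in> As ! r)}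
      = {mul (permute_list \<sigma> xs) | xs. list_all2 (\<in>) xs As}"
  proof -
    have "length xs = n \<and> (\<forall>r<n. xs ! r \<in> As ! r) \<longleftrightarrow> list_all2 (\<in>) xs As" for xs
      using assms by (auto simp: list_all2_conv_all_nth)
    moreover have "map (\<lambda>r. xs ! \<sigma> r) [0..<n] = permute_list \<sigma> xs" if "length xs = n" for xs
      using that by (simp add: permute_list_def)
    ultimately show ?thesis
      by (smt (verit) Collect_cong)
  qed
  then show ?thesis by (simp add: brk_def)
qed

lemma brk_id_permute_list:
  assumes "length As = n" and \<tau>: "\<tau> permutes {..<n}"
  shows "brk scale mul n id (permute_list \<tau> As) = brk scale mul n \<tau> As"
proof -
  have "{mul xs | xs. list_all2 (\<in>) xs (permute_list \<tau> As)}
      = {mul (permute_list \<tau> ys) | ys. list_all2 (\<in>) ys As}"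
  proof (intro set_eqI iffI)
    fix z assume "z \<in> {mul xs | xs. list_all2 (\<in>) xs (permute_list \<tau> As)}"
    then obtain xs where z: "z = mul xs" and xs: "list_all2 (\<in>) xs (permute_list \<tau> As)"
      by blast
    have len: "length xs = n" using xs assms(1) by (simp add: list_all2_lengthD)
    have "xs = permute_list \<tau> (permute_list (inv \<tau>) xs)"
      using \<tau> len by (simp flip: permute_list_compose add: permutes_inv_o(2))
    moreover have "list_all2 (\<in>) (permute_list (inv \<tau>) xs) As"
      using xs \<tau> len calculation
      by (metis length_permute_list list_all2_permute_list_iff)
    ultimately show "z \<in> {mul (permute_list \<tau> ys) | ys. list_all2 (\<in>) ys As}"
      using z by (metis (mono_tags, lifting) mem_Collect_eq)
  next
    fix z assume "z \<in> {mul (permute_list \<tau> ys) | ys. list_all2 (\<in>) ys As}"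
    then obtain ys where "z = mul (permute_list \<tau> ys)" "list_all2 (\<in>) ys As" by blast
    moreover have "length ys = n" using calculation(2) assms(1) by (simp add: list_all2_lengthD)
    ultimately show "z \<in> {mul xs | xs. list_all2 (\<in>) xs (permute_list \<tau> As)}"
      using \<tau> list_all2_permute_list_iff by blast
  qed
  then show ?thesis
    using assms by (simp add: brk_conv_permute_list)
qed

context vector_space
begin

lemma brk_id_mset_eq:
  assumes "mset As = mset Bs" "length Bs = n"
  obtains \<tau> where "\<tau> \<in> perms n" "brk scale mul n \<tau> Bs = brk scale mul n id As"
proof -
  obtain \<tau> where \<tau>: "\<tau> permutes {..<length Bs}" "permute_list \<tau> Bs = As"
    using mset_eq_permutation[OF assms(1)] by blast
  then show thesis
    using assms(2) brk_id_permute_list[of Bs n \<tau>] by (intro that[of \<tau>]) (auto simp: perms_iff_permutes)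
qed

lemma mul_in_brk_id: "list_all2 (\<in>) zs As \<Longrightarrow> length As = n \<Longrightarrow> mul zs \<in> brk scale mul n id As"
  by (auto simp: brk_conv_permute_list intro!: span_base)

lemma brk_id_singletons:
  assumes "length zs = n"
  shows "brk scale mul n id (map (\<lambda>z. {z}) zs) = span {mul zs}"
proof -
  have "list_all2 (\<in>) xs (map (\<lambda>z. {z}) zs) \<longleftrightarrow> xs = zs" for xs
    by (auto simp: list_all2_conv_all_nth intro: nth_equalityI)
  then show ?thesis using assms by (simp add: brk_conv_permute_list)
qed

lemma multilinear_slot_subspace:
  assumes "multilinear scale n mul" "subspace T" "length zs = n" "r < n"
  shows "subspace {y. mul (zs[r := y]) \<in> T}"
proof -
  interpret module_hom scale scale "\<lambda>y. mul (zs[r := y])"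
    using assms by (simp add: multilinear_def module_hom_iff_linear)
  show ?thesis using assms(2) unfolding subspace_def by (auto simp: add scale)
qed

lemma multilinear_mem_subspace_if_generators:
  assumes ml: "multilinear scale n mul" and T: "subspace T"
    and gen: "\<And>ws. length ws = n \<Longrightarrow> \<forall>q<n. ws ! q \<in> G q \<Longrightarrow> mul ws \<in> T"
    and zs: "length zs = n" "\<forall>q<n. zs ! q \<in> span (G q)"
  shows "mul zs \<in> T"
proof -
  have "\<forall>zs. length zs = n \<and> (\<forall>q<n. zs ! q \<in> (if q < m then span (G q) else G q)) \<longrightarrow> mul zs \<in> T"
    for m
  proof (induction m)
    case 0
    then show ?case using gen by simp
  next
    case (Suc m)
    show ?case
    proof (intro allI impI)
      fix zs assume zs: "length zs = n \<and> (\<forall>q<n. zs ! q \<in> (if q < Suc m then span (G q) else G q))"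
      show "mul zs \<in> T"
      proof (cases "m < n")
        case False
        then show ?thesis using Suc.IH zs by (metis less_SucI not_less order.strict_trans2)
      next
        case True
        have "G m \<subseteq> {y. mul (zs[m := y]) \<in> T}"
        proof
          fix y assume "y \<in> G m"
          then have "\<forall>q<n. zs[m := y] ! q \<in> (if q < m then span (G q) else G q)"
            using zs by (auto simp: nth_list_update)
          then show "y \<in> {y. mul (zs[m := y]) \<in> T}" using Suc.IH zs by simp
        qed
        then have "span (G m) \<subseteq> {y. mul (zs[m := y]) \<in> T}"
          using span_minimal multilinear_slot_subspace[OF ml T] zs True by blast
        moreover have "zs ! m \<in> span (G m)" using zs True by auto
        ultimately show ?thesis by auto
      qed
    qed
  qed
  from this[of n] zs show ?thesis by auto
qed

lemma graded_subspace_span: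
  assumes "A \<subseteq> (\<Union>g. Lg g)"
  shows "graded_subspace scale Lg (span A)"
  unfolding graded_subspace_def
proof
  show "subspace (span A)" by simp
  have "A \<subseteq> (\<Union>g. span A \<inter> Lg g)" using assms span_superset[of A] by blast
  then show "span A \<subseteq> span (\<Union>g. span A \<inter> Lg g)" by (rule span_mono)
qed

lemma line_eq_span: "line scale x = span {x}"
  by (simp add: line_def span_singleton)

end

section \<open>Quasi-multiplicative bases and the index maps\<close>

locale qm_color_gLt_algebra = vector_space scale
  for scale :: "'f::field \<Rightarrow> 'v::ab_group_add \<Rightarrow> 'v"
  and Lg :: "'g::ab_group_add \<Rightarrow> 'v set"
  and n :: nat
  and mul :: "'v list \<Rightarrow> 'v"
  and eps :: "'g \<Rightarrow> 'g \<Rightarrow> 'f"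
  and alpha :: "nat \<Rightarrow> nat \<Rightarrow> nat \<Rightarrow> (nat \<Rightarrow> nat) \<Rightarrow> (nat \<Rightarrow> nat) \<Rightarrow> 'f"
  and V W :: "'v set"
  and I :: "'i set"
  and e :: "'i \<Rightarrow> 'v" +
  assumes n_ge_2: "n \<ge> 2"
    and gLt_algebra: "color_gLt_algebra scale Lg n mul eps alpha"
    and qm_basis: "qm_basis scale Lg n mul V W I e"
begin

abbreviation "u \<equiv> uset V e"
abbreviation "Mu \<equiv> mu scale mul n V I e"
abbreviation "Amap \<equiv> amap scale mul n V I e"

lemma uset_simps [simp]: "u None = V" "u (Some j) = {e j}"
  by (simp_all add: uset_def)

lemma subspace_V: "subspace V"
  and V_inter_W: "V \<inter> W = {0}"
  and V_plus_W: "setsum V W = UNIV"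
  and independent_basis: "independent (e ` I)"
  and span_basis: "span (e ` I) = W"
  and basis_homogeneous: "j \<in> I \<Longrightarrow> e j \<in> (\<Union>g. Lg g)"
  using qm_basis unfolding qm_basis_def graded_subspace_def by auto

lemma basis_product_cases:
  "length is = n \<Longrightarrow> set is \<subseteq> I \<Longrightarrow>
    (\<exists>r\<in>I. mul (map e is) \<in> line scale (e r)) \<or> mul (map e is) \<in> V"
  using qm_basis unfolding qm_basis_def by blast

lemma brk_basis_V_in_line:
  "0 < k \<Longrightarrow> k < n \<Longrightarrow> length is = k \<Longrightarrow> set is \<subseteq> I \<Longrightarrow> \<sigma> \<in> perms n \<Longrightarrow>
    \<exists>r\<in>I. brk scale mul n \<sigma> (map (\<lambda>i. {e i}) is @ replicate (n - k) V) \<subseteq> line scale (e r)"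
  using qm_basis unfolding qm_basis_def by blast

lemma multilinear_mul: "multilinear scale n mul"
  and homogeneous_mul: "length xs = n \<Longrightarrow> length gs = n \<Longrightarrow> \<forall>r<n. xs ! r \<in> Lg (gs ! r)
      \<Longrightarrow> mul xs \<in> Lg (sum_list gs)"
  and span_homogeneous: "span (\<Union>g. Lg g) = UNIV"
  and gLt_identity: "color_gLt_identity scale Lg n mul eps alpha"
  using gLt_algebra
  unfolding color_gLt_algebra_def graded_nary_algebra_def graded_space_def by blast+

lemma basis_nonzero: "j \<in> I \<Longrightarrow> e j \<noteq> 0"
  using independent_basis dependent_zero by force

lemma line_basis_subset_W: "j \<in> I \<Longrightarrow> line scale (e j) \<subseteq> W"
  unfolding line_eq_span span_basis[symmetric] by (intro span_mono) auto

lemma span_V_basis: "span (V \<union> e ` I) = UNIV"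
proof -
  have "span V = V" using subspace_V by (simp add: span_eq_iff)
  then show ?thesis
    using V_plus_W unfolding span_Un span_basis setsum_def by metis
qed

lemma V_inter_line: "r \<in> I \<Longrightarrow> V \<inter> line scale (e r) = {0}"
  using line_basis_subset_W V_inter_W subspace_V subspace_0 line_eq_span span_zero by blast

lemma amap_eq_if_brk_eq:
  "brk scale mul n \<tau> (map u L) = brk scale mul n \<sigma> (map u L') \<Longrightarrow> Amap \<tau> L = Amap \<sigma> L'"
  by (simp add: amap_def)

lemma Some_in_amap:
  assumes "r \<in> I" "brk scale mul n \<sigma> (map u L) \<noteq> {0}" "brk scale mul n \<sigma> (map u L) \<subseteq> line scale (e r)"
  shows "Some r \<in> Amap \<sigma> L"
  using assms by (simp add: amap_def Let_def)

lemma amap_eq_None: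
  assumes "brk scale mul n \<sigma> (map u L) \<noteq> {0}" "brk scale mul n \<sigma> (map u L) \<subseteq> V"
  shows "Amap \<sigma> L = {None}"
proof -
  have "\<not> brk scale mul n \<sigma> (map u L) \<subseteq> line scale (e r)" if "r \<in> I" for r
    using assms V_inter_line[OF that] span_zero unfolding brk_def by blast
  then show ?thesis using assms by (auto simp: amap_def Let_def)
qed

lemma amap_mset_eq:
  assumes "mset js = mset L" "length L = n"
  obtains \<tau> where "\<tau> \<in> perms n" "Amap \<tau> L = Amap id js"
proof -
  have "mset (map u js) = mset (map u L)" using assms(1) by simp
  with brk_id_mset_eq assms(2) obtain \<tau> where
    "\<tau> \<in> perms n" "brk scale mul n \<tau> (map u L) = brk scale mul n id (map u js)"
    by (metis length_map)
  then show thesis using amap_eq_if_brk_eq that by blast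
qed

lemma Some_in_mu_Pos:
  assumes "length js = n" "p < n" "js ! p = Some j" "Some r \<in> Amap id js"
  obtains rest where "mset js = mset (Some j # rest)" "Some r \<in> Mu (Pos (Some j)) (False, rest)"
proof -
  obtain rest where rest: "mset js = mset (Some j # rest)"
    using mset_obtain_nth[of p js] assms by auto
  then obtain \<tau> where "\<tau> \<in> perms n" "Amap \<tau> (Some j # rest) = Amap id js"
    using amap_mset_eq assms(1) mset_eq_length by metis
  then show thesis
    using rest assms(4) by (intro that[of rest]) (auto simp: mu_def)
qed

lemma Some_in_mu_Bar:
  assumes "length js = n" "p < n" "q < n" "p \<noteq> q" "js ! p = Some j" "js ! q = Some k"
    "Some k \<in> Jset I" "Amap id js = {None}"
  obtains rest where "mset js = mset (Some j # Some k # rest)"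
    "Some k \<in> Mu (Bar (Some j)) (False, None # rest)"
proof -
  obtain rest where rest: "mset js = mset (Some j # Some k # rest)"
    using mset_obtain_two_nth[of p js q] assms by auto
  then have "mset js = mset (Some k # Some j # rest)" by simp
  then obtain \<tau> where \<tau>: "\<tau> \<in> perms n" "Amap \<tau> (Some k # Some j # rest) = {None}"
    using amap_mset_eq assms(1,8) mset_eq_length by metis
  \<comment> \<open>the barred clause of mu with k = 0, i.e. with the V-slot as target of b\<close>
  have "Some k \<in> bmap scale mul n V I e \<tau> None (Some j # rest)"
    using \<tau> assms(7) by (simp add: bmap_def)
  then have "Some k \<in> Mu (Bar (Some j)) (False, None # rest)"
    using \<tau>(1) n_ge_2 by (auto simp: mu_def intro!: bexI[of _ 0])
  with rest show thesis by (rule that)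
qed

lemma brk_in_line_if_mixed:
  assumes "length js = n" "set js \<subseteq> Jset I" "None \<in> set js" "Some j \<in> set js"
  shows "\<exists>r\<in>I. brk scale mul n id (map u js) \<subseteq> line scale (e r)"
proof -
  define "is" where "is = map the (filter (\<lambda>x. x \<noteq> None) js)"
  define k where "k = length is"
  have Some_is: "map Some is = filter (\<lambda>x. x \<noteq> None) js"
    unfolding is_def map_map by (rule map_idI) auto
  have "mset js = mset (filter (\<lambda>x. x \<noteq> None) js) + mset (filter (\<lambda>x. x = None) js)"
    by (simp add: multiset_partition)
  moreover have "filter (\<lambda>x. x = None) js = replicate (n - k) None"
    using sum_length_filter_compl[of "\<lambda>x. x \<noteq> None" js] replicate_length_filter[of None js]
      assms(1) Some_is[symmetric]
    by (auto simp: k_def eq_commute[of None])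
  ultimately have mset_js: "mset js = mset (map Some is @ replicate (n - k) None)"
    using Some_is by simp
  have k_eq: "k = length (filter (\<lambda>x. x \<noteq> None) js)"
    by (simp add: k_def is_def)
  have "k + length (filter (\<lambda>x. \<not> x \<noteq> None) js) = n"
    using sum_length_filter_compl[of "\<lambda>x. x \<noteq> None" js] assms(1) k_eq by simp
  moreover have "0 < length (filter (\<lambda>x. x \<noteq> None) js)"
    "0 < length (filter (\<lambda>x. \<not> x \<noteq> None) js)"
    using assms(3,4) by (auto simp: length_greater_0_conv filter_empty_conv)
  ultimately have k: "0 < k" "k < n"
    unfolding k_eq by linarith+
  have "set is \<subseteq> I"
    using assms(2) by (auto simp: is_def Jset_def)
  moreover obtain \<tau> where "\<tau> \<in> perms n"
    "brk scale mul n \<tau> (map u (map Some is @ replicate (n - k) None)) = brk scale mul n id (map u js)"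
  proof (rule brk_id_mset_eq)
    show "mset (map u js) = mset (map u (map Some is @ replicate (n - k) None))"
      using mset_js by (metis mset_map)
    show "length (map u (map Some is @ replicate (n - k) None)) = n"
      using k by (simp add: k_def)
  qed
  moreover have "map u (map Some is @ replicate (n - k) None) = map (\<lambda>i. {e i}) is @ replicate (n - k) V"
    by simp
  ultimately show ?thesis
    using brk_basis_V_in_line[OF k _ _ \<open>\<tau> \<in> perms n\<close>] by (metis k_def)
qed

abbreviation "Phi \<equiv> phi scale mul n V I e"
abbreviation "Conn \<equiv> connected scale mul n V I e"

lemma Pos_in_phi: "jj \<in> J \<Longrightarrow> Some r \<in> Mu jj X \<Longrightarrow> Pos (Some r) \<in> Phi J X"
  unfolding phi_def by (auto simp: Let_def)

lemma Bar_in_phi_if_Pos: "Pos (Some j) \<in> Phi J X \<Longrightarrow> Bar (Some j) \<in> Phi J X"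
  unfolding phi_def by (auto simp: Let_def split: if_splits)

lemma connected_chainE:
  assumes "Conn i j" "jj \<in> {Pos (Some j), Bar (Some j)}"
  obtains Xs ii where "\<forall>X\<in>set Xs. length (snd X) = n - 1 \<and> set (snd X) \<subseteq> Jset I"
    "ii \<in> {Pos (Some i), Bar (Some i)}"
    "\<forall>s\<in>{1..<length Xs}. foldl Phi {ii} (take s Xs) \<noteq> {}" "jj \<in> foldl Phi {ii} Xs"
proof (cases "i = j")
  case True
  then show thesis using that[of "[]" jj] assms(2) by auto
next
  case False
  then obtain Xs ii where Xs: "length Xs \<ge> 1"
    "\<forall>X\<in>set Xs. length (snd X) = n - 1 \<and> set (snd X) \<subseteq> Jset I"
    "ii \<in> {Pos (Some i), Bar (Some i)}" "\<forall>s\<in>{1..<length Xs}. foldl Phi {ii} (take s Xs) \<noteq> {}"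
    "Pos (Some j) \<in> foldl Phi {ii} Xs"
    using assms(1) unfolding connected_def by blast
  moreover obtain Ys Y where "Xs = Ys @ [Y]"
    using Xs(1) by (metis One_nat_def le_numeral_extra(2) length_0_conv rev_exhaust)
  then have "Bar (Some j) \<in> foldl Phi {ii} Xs"
    using Bar_in_phi_if_Pos Xs(5) by auto
  ultimately show thesis using that[of Xs ii] assms(2) by auto
qed

lemma connected_step:
  assumes "Conn i j" "jj \<in> {Pos (Some j), Bar (Some j)}" "Some r \<in> Mu jj X"
    "length (snd X) = n - 1" "set (snd X) \<subseteq> Jset I" "r \<in> I"
  shows "Conn i r"
proof -
  obtain Xs ii where Xs: "\<forall>X\<in>set Xs. length (snd X) = n - 1 \<and> set (snd X) \<subseteq> Jset I"
    "ii \<in> {Pos (Some i), Bar (Some i)}"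
    "\<forall>s\<in>{1..<length Xs}. foldl Phi {ii} (take s Xs) \<noteq> {}" "jj \<in> foldl Phi {ii} Xs"
    using connected_chainE[OF assms(1,2)] by blast
  have "\<forall>s\<in>{1..<length (Xs @ [X])}. foldl Phi {ii} (take s (Xs @ [X])) \<noteq> {}"
    using Xs(3,4) by (auto simp: less_Suc_eq)
  moreover have "Pos (Some r) \<in> foldl Phi {ii} (Xs @ [X])"
    using Pos_in_phi[OF Xs(4) assms(3)] by simp
  moreover have "i \<in> I" using assms(1) unfolding connected_def by blast
  ultimately show ?thesis
    unfolding connected_def using assms(4-6) Xs(1,2)
    by (intro conjI disjI2 exI[of _ "Xs @ [X]"] exI[of _ ii]) auto
qed

definition mu_closed :: "'i set \<Rightarrow> bool" where
  "mu_closed K \<longleftrightarrow> K \<subseteq> I \<and>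
    (\<forall>j\<in>K. \<forall>jj\<in>{Pos (Some j), Bar (Some j)}. \<forall>X r.
       length (snd X) = n - 1 \<and> set (snd X) \<subseteq> Jset I \<and> r \<in> I \<and> Some r \<in> Mu jj X \<longrightarrow> r \<in> K)"

lemma mu_closed_cls: "mu_closed (cls scale mul n V I e i)"
  unfolding mu_closed_def cls_def using connected_step by blast

section \<open>The ideal spanned by a mu-closed set of indices\<close>

definition V_products :: "'i set \<Rightarrow> 'v set" where
  "V_products K = {mul (map e is) | is. length is = n \<and> set is \<subseteq> K \<and> mul (map e is) \<in> V}"

definition Jspace :: "'i set \<Rightarrow> 'v set" where
  "Jspace K = span (V_products K \<union> e ` K)"

definition degree :: "'v \<Rightarrow> 'g" where
  "degree x = (SOME g. x \<in> Lg g)"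

lemma in_Lg_degree: "x \<in> (\<Union>g. Lg g) \<Longrightarrow> x \<in> Lg (degree x)"
  unfolding degree_def by (auto intro: someI)

lemma mul_basis_homogeneous:
  assumes "length is = n" "set is \<subseteq> I"
  shows "mul (map e is) \<in> (\<Union>g. Lg g)"
proof -
  have "\<forall>r<n. map e is ! r \<in> Lg (map (degree \<circ> e) is ! r)"
    using assms basis_homogeneous in_Lg_degree by (auto simp: subset_iff)
  then show ?thesis using homogeneous_mul[of "map e is" "map (degree \<circ> e) is"] assms(1) by auto
qed

lemma mul_insert_in_span_rhs_terms:
  assumes "k \<in> {1..n}" "length xs = n" "length ys = n - 1"
    "\<forall>r<n. xs ! r \<in> (\<Union>g. Lg g)" "\<forall>r<n - 1. ys ! r \<in> (\<Union>g. Lg g)"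
  shows "mul (take (k - 1) ys @ [mul xs] @ drop (k - 1) ys) \<in>
    span {rhs_term mul n xs ys ii jj \<sigma>1 \<sigma>2 | ii jj \<sigma>1 \<sigma>2. ii \<in> {1..n} \<and> \<sigma>1 \<in> perms n}"
proof -
  have "length xs = n \<and> length ys = n - 1 \<and> length (map degree xs) = n \<and>
      length (map degree ys) = n - 1 \<and> (\<forall>r<n. xs ! r \<in> Lg (map degree xs ! r)) \<and>
      (\<forall>r<n - 1. ys ! r \<in> Lg (map degree ys ! r))"
    using assms(2-5) in_Lg_degree by simp
  note identity = gLt_identity[unfolded color_gLt_identity_def, rule_format, OF assms(1) this]
  show ?thesis
    unfolding identity by (intro span_sum span_scale span_base) auto
qed

lemma Jspace_eq_setsum: "Jspace K = setsum (span (V_products K)) (span (e ` K))"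
  by (simp add: Jspace_def span_Un setsum_def)

lemma span_V_products_subset_V: "span (V_products K) \<subseteq> V"
  using subspace_V by (intro span_minimal) (auto simp: V_products_def)

context
  fixes K :: "'i set"
  assumes closed: "mu_closed K"
begin

lemma K_subset_I: "K \<subseteq> I"
  using closed by (simp add: mu_closed_def)

lemma mu_closedD:
  "j \<in> K \<Longrightarrow> jj \<in> {Pos (Some j), Bar (Some j)} \<Longrightarrow> Some r \<in> Mu jj (b, js) \<Longrightarrow>
    length js = n - 1 \<Longrightarrow> set js \<subseteq> Jset I \<Longrightarrow> r \<in> I \<Longrightarrow> r \<in> K"
  using closed unfolding mu_closed_def by (metis snd_conv)

lemma subspace_Jspace: "subspace (Jspace K)"
  by (simp add: Jspace_def)

lemma line_subset_Jspace: "r \<in> K \<Longrightarrow> line scale (e r) \<subseteq> Jspace K"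
  unfolding line_eq_span Jspace_def by (rule span_mono) blast

lemma V_products_subset_Jspace: "V_products K \<subseteq> Jspace K"
  unfolding Jspace_def using span_superset by blast

lemma line_index_in_K:
  assumes js: "length js = n" "set js \<subseteq> Jset I" "p < n" "js ! p = Some j" "j \<in> K"
    and S: "brk scale mul n id (map u js) \<noteq> {0}" "brk scale mul n id (map u js) \<subseteq> line scale (e r)"
    and r: "r \<in> I"
  shows "r \<in> K"
proof -
  obtain rest where rest: "mset js = mset (Some j # rest)" "Some r \<in> Mu (Pos (Some j)) (False, rest)"
    using Some_in_mu_Pos[OF js(1,3,4) Some_in_amap[OF r S]] .
  have "length rest = n - 1" "set rest \<subseteq> Jset I"
    using mset_eq_ConsD[OF rest(1)] js(1,2) by auto
  then show ?thesis
    using mu_closedD[OF js(5) _ rest(2)] r by simp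
qed

lemma V_product_indices_in_K:
  assumes "length is = n" "set is \<subseteq> I" "p < n" "is ! p \<in> K"
    and None: "Amap id (map Some is) = {None}"
  shows "set is \<subseteq> K"
proof -
  have "is ! q \<in> K" if q: "q < n" for q
  proof (cases "q = p")
    case True
    then show ?thesis using assms by simp
  next
    case False
    have "is ! q \<in> I" using assms(1,2) q by (metis nth_mem subsetD)
    then have "Some (is ! q) \<in> Jset I" by (simp add: Jset_def)
    then obtain rest where rest: "mset (map Some is) = mset (Some (is ! p) # Some (is ! q) # rest)"
      "Some (is ! q) \<in> Mu (Bar (Some (is ! p))) (False, None # rest)"
      using Some_in_mu_Bar[of "map Some is" p q "is ! p" "is ! q"] assms(1,3) q False None
      by (metis length_map nth_map)
    have "set rest \<subseteq> Jset I"
      using mset_eq_setD[OF rest(1)] assms(2) unfolding Jset_def by auto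
    moreover have "length rest = n - 2" using mset_eq_length[OF rest(1)] assms(1) by simp
    ultimately show ?thesis
      using mu_closedD[OF assms(4) _ rest(2)] n_ge_2 \<open>is ! q \<in> I\<close> by (simp add: Jset_def)
  qed
  then show ?thesis using assms(1) by (metis in_set_conv_nth subsetI)
qed

lemma mul_basis_in_Jspace:
  assumes "length is = n" "set is \<subseteq> I" "p < n" "is ! p \<in> K"
  shows "mul (map e is) \<in> Jspace K"
proof (cases "mul (map e is) = 0")
  case True
  then show ?thesis using subspace_Jspace subspace_0 by simp
next
  case False
  let ?S = "brk scale mul n id (map u (map Some is))"
  have S_eq: "?S = span {mul (map e is)}"
    using brk_id_singletons[of "map e is"] assms(1) by (simp add: comp_def)
  then have S: "?S \<noteq> {0}" using False span_base[of "mul (map e is)"] by blast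
  have js: "length (map Some is) = n" "set (map Some is) \<subseteq> Jset I" "map Some is ! p = Some (is ! p)"
    using assms(1-3) by (auto simp: Jset_def)
  from basis_product_cases[OF assms(1,2)] show ?thesis
  proof
    assume "\<exists>r\<in>I. mul (map e is) \<in> line scale (e r)"
    then obtain r where r: "r \<in> I" "mul (map e is) \<in> line scale (e r)" by blast
    then have "?S \<subseteq> line scale (e r)"
      unfolding S_eq line_eq_span by (intro span_minimal) auto
    then have "r \<in> K" using line_index_in_K[OF js(1,2) assms(3) js(3) assms(4) S] r(1) by blast
    then show ?thesis using line_subset_Jspace r(2) by blast
  next
    assume V: "mul (map e is) \<in> V"
    then have "?S \<subseteq> V" unfolding S_eq using subspace_V by (intro span_minimal) auto
    then have "Amap id (map Some is) = {None}" using amap_eq_None S by simp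
    then have "set is \<subseteq> K" using V_product_indices_in_K assms by blast
    then show ?thesis
      using V assms(1) V_products_subset_Jspace unfolding V_products_def by blast
  qed
qed

lemma mul_in_Jspace_if_symbols:
  assumes js: "length js = n" "set js \<subseteq> Jset I" "p < n" "js ! p = Some j" "j \<in> K"
    and zs: "list_all2 (\<in>) zs (map u js)"
  shows "mul zs \<in> Jspace K"
proof (cases "None \<in> set js")
  case True
  let ?S = "brk scale mul n id (map u js)"
  have zs_S: "mul zs \<in> ?S" using mul_in_brk_id[OF zs] js(1) by simp
  have "Some j \<in> set js" using js(1,3,4) nth_mem[of p js] by simp
  then obtain r where r: "r \<in> I" "?S \<subseteq> line scale (e r)"
    using brk_in_line_if_mixed[OF js(1,2) True] by blast
  show ?thesis
  proof (cases "?S = {0}")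
    case True
    then show ?thesis using zs_S subspace_Jspace subspace_0 by simp
  next
    case False
    with line_index_in_K[OF js _ r(2,1)] have "r \<in> K" .
    then show ?thesis using line_subset_Jspace zs_S r(2) by blast
  qed
next
  case False
  define "is" where "is = map the js"
  have js_is: "js = map Some is"
    unfolding is_def map_map using False by (intro map_idI[symmetric]) (metis comp_apply option.collapse)
  have "zs = map e is"
    using zs js_is by (auto simp: list_all2_conv_all_nth intro: nth_equalityI)
  moreover have "length is = n" "set is \<subseteq> I" "is ! p = j"
    using js js_is by (auto simp: Jset_def)
  ultimately show ?thesis using mul_basis_in_Jspace js(3,5) by blast
qed

lemma mul_in_Jspace_if_basis_slot:
  assumes "length zs = n" "p < n" "zs ! p = e j" "j \<in> K"
  shows "mul zs \<in> Jspace K"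
proof (rule multilinear_mem_subspace_if_generators[OF multilinear_mul subspace_Jspace])
  show "length zs = n" by fact
  show "\<forall>q<n. zs ! q \<in> span (if q = p then {e j} else V \<union> e ` I)"
    using assms(3) span_V_basis by (simp add: span_base)
  fix ws assume ws: "length ws = n" "\<forall>q<n. ws ! q \<in> (if q = p then {e j} else V \<union> e ` I)"
  have "\<exists>J\<in>Jset I. ws ! q \<in> u J \<and> (q = p \<longrightarrow> J = Some j)" if q: "q < n" for q
  proof (cases "q = p")
    case True
    moreover have "Some j \<in> Jset I" using K_subset_I assms(4) by (auto simp: Jset_def)
    moreover have "ws ! q \<in> (if q = p then {e j} else V \<union> e ` I)" using ws(2) q by blast
    ultimately show ?thesis by auto
  next
    case False
    moreover have "ws ! q \<in> (if q = p then {e j} else V \<union> e ` I)" using ws(2) q by blast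
    ultimately have "ws ! q \<in> V \<union> e ` I" by simp
    then consider "ws ! q \<in> V" | k where "k \<in> I" "ws ! q = e k" by blast
    then show ?thesis
    proof cases
      case 1
      then show ?thesis using False by (intro bexI[of _ None]) (auto simp: Jset_def)
    next
      case 2
      then show ?thesis using False by (intro bexI[of _ "Some k"]) (auto simp: Jset_def)
    qed
  qed
  then obtain f where f: "\<And>q. q < n \<Longrightarrow> f q \<in> Jset I \<and> ws ! q \<in> u (f q) \<and> (q = p \<longrightarrow> f q = Some j)"
    by metis
  show "mul ws \<in> Jspace K"
  proof (rule mul_in_Jspace_if_symbols)
    show "length (map f [0..<n]) = n" "map f [0..<n] ! p = Some j"
      using f assms(2) by simp_all
    show "set (map f [0..<n]) \<subseteq> Jset I" using f by auto
    show "list_all2 (\<in>) ws (map u (map f [0..<n]))"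
      using f ws(1) by (simp add: list_all2_conv_all_nth)
  qed (use assms in auto)
qed

lemma rhs_term_in_Jspace:
  assumes "ii \<in> {1..n}" "\<sigma>1 \<in> perms n" "length is = n" "set is \<subseteq> K"
  shows "rhs_term mul n (map e is) ys ii jj \<sigma>1 \<sigma>2 \<in> Jspace K"
proof -
  let ?x = "\<lambda>r. map e is ! \<sigma>1 r"
  define zs where "zs = map ?x [0..<ii-1] @
    [mul (map (\<lambda>r. ys ! \<sigma>2 r) [0..<jj-1] @ [?x (ii-1)] @ map (\<lambda>r. ys ! \<sigma>2 r) [jj-1..<n-1])] @
    map ?x [ii..<n]"
  \<comment> \<open>as n \<ge> 2, the outer product has some argument x_{\<sigma>1 t} outside the inner product\<close>
  define t where "t = (if ii \<ge> 2 then 0 else 1 :: nat)"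
  have rhs: "rhs_term mul n (map e is) ys ii jj \<sigma>1 \<sigma>2 = mul zs"
    by (simp add: rhs_term_def zs_def)
  have len: "length zs = n" using assms(1) by (auto simp: zs_def)
  have "ii = 1 \<or> 2 \<le> ii" using assms(1) by auto
  then have t: "t < n" "zs ! t = ?x t"
    using n_ge_2 by (auto simp: zs_def t_def nth_append)
  have "\<sigma>1 t < n"
    using t(1) assms(2) permutes_in_image[of \<sigma>1 "{..<n}" t] by (simp add: perms_iff_permutes)
  then have "?x t = e (is ! \<sigma>1 t)" "is ! \<sigma>1 t \<in> K"
    using assms(3,4) nth_mem by auto
  then show ?thesis
    using rhs len t mul_in_Jspace_if_basis_slot by metis
qed

lemma mul_in_Jspace_if_product_slot:
  assumes zs: "length zs = n" "p < n" "zs ! p = mul (map e is)" "length is = n" "set is \<subseteq> K"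
    and hom: "\<forall>q<n. q \<noteq> p \<longrightarrow> zs ! q \<in> (\<Union>g. Lg g)"
  shows "mul zs \<in> Jspace K"
proof -
  define ys where "ys = take p zs @ drop (Suc p) zs"
  have ys: "length ys = n - 1" "\<forall>r<n - 1. ys ! r \<in> (\<Union>g. Lg g)"
    using zs(1,2) hom by (auto simp: ys_def nth_append min_def)
  have "zs = take (Suc p - 1) ys @ [mul (map e is)] @ drop (Suc p - 1) ys"
    using id_take_nth_drop[OF zs(2)[folded zs(1)]] zs(1-3) by (simp add: ys_def)
  moreover have "\<forall>r<n. map e is ! r \<in> (\<Union>g. Lg g)"
    using zs(4,5) K_subset_I basis_homogeneous by (auto simp: subset_iff)
  ultimately have "mul zs \<in>
      span {rhs_term mul n (map e is) ys ii jj \<sigma>1 \<sigma>2 | ii jj \<sigma>1 \<sigma>2. ii \<in> {1..n} \<and> \<sigma>1 \<in> perms n}"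
    using mul_insert_in_span_rhs_terms[of "Suc p" "map e is" ys] zs ys by simp
  also have "\<dots> \<subseteq> Jspace K"
    using rhs_term_in_Jspace zs(4,5) by (intro span_minimal subspace_Jspace) blast
  finally show ?thesis .
qed

lemma mul_in_Jspace_if_slot:
  assumes "length zs = n" "p < n" "zs ! p \<in> Jspace K"
  shows "mul zs \<in> Jspace K"
proof (rule multilinear_mem_subspace_if_generators[OF multilinear_mul subspace_Jspace])
  show "length zs = n" by fact
  show "\<forall>q<n. zs ! q \<in> span (if q = p then V_products K \<union> e ` K else (\<Union>g. Lg g))"
    using assms(3) span_homogeneous by (simp add: Jspace_def)
  fix ws assume ws: "length ws = n"
    "\<forall>q<n. ws ! q \<in> (if q = p then V_products K \<union> e ` K else (\<Union>g. Lg g))"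
  have hom: "\<forall>q<n. q \<noteq> p \<longrightarrow> ws ! q \<in> (\<Union>g. Lg g)" using ws(2) by auto
  have "ws ! p \<in> V_products K \<union> e ` K" using ws(2) assms(2) by auto
  then show "mul ws \<in> Jspace K"
  proof
    assume "ws ! p \<in> V_products K"
    then obtain "is" where "ws ! p = mul (map e is)" "length is = n" "set is \<subseteq> K"
      unfolding V_products_def by blast
    then show ?thesis using mul_in_Jspace_if_product_slot ws(1) assms(2) hom by blast
  next
    assume "ws ! p \<in> e ` K"
    then show ?thesis using mul_in_Jspace_if_basis_slot ws(1) assms(2) by blast
  qed
qed

lemma graded_subspace_Jspace: "graded_subspace scale Lg (Jspace K)"
  unfolding Jspace_def
  using mul_basis_homogeneous basis_homogeneous K_subset_I
  by (intro graded_subspace_span) (auto simp: V_products_def)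

lemma color_gLt_ideal_Jspace: "color_gLt_ideal scale Lg n mul (Jspace K)"
  unfolding color_gLt_ideal_def
proof (intro conjI ballI graded_subspace_Jspace)
  fix \<sigma> assume "\<sigma> \<in> perms n"
  then have \<sigma>: "\<sigma> permutes {..<n}" by (simp add: perms_iff_permutes)
  have "mul (permute_list \<sigma> xs) \<in> Jspace K"
    if xs: "list_all2 (\<in>) xs (Jspace K # replicate (n - 1) UNIV)" for xs
  proof (rule mul_in_Jspace_if_slot)
    have len: "length xs = n" using xs n_ge_2 by (simp add: list_all2_lengthD)
    then show "length (permute_list \<sigma> xs) = n" by simp
    show "inv \<sigma> 0 < n" using permutes_in_image[OF permutes_inv[OF \<sigma>]] n_ge_2 by auto
    then have "permute_list \<sigma> xs ! inv \<sigma> 0 = xs ! 0"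
      using \<sigma> len by (simp add: permute_list_nth permutes_inverses(1))
    then show "permute_list \<sigma> xs ! inv \<sigma> 0 \<in> Jspace K"
      using xs by (cases xs) auto
  qed
  then have "{mul (permute_list \<sigma> xs) | xs. list_all2 (\<in>) xs (Jspace K # replicate (n - 1) UNIV)}
      \<subseteq> Jspace K"
    by blast
  from span_minimal[OF this subspace_Jspace]
  show "brk scale mul n \<sigma> (Jspace K # replicate (n - 1) UNIV) \<subseteq> Jspace K"
    using n_ge_2 by (simp add: brk_conv_permute_list)
qed

lemma span_products_inter_V:
  "span {mul (map e is) | is. length is = n \<and> set is \<subseteq> K} \<inter> V = span (V_products K)"
proof
  have "V_products K \<subseteq> {mul (map e is) | is. length is = n \<and> set is \<subseteq> K}"
    unfolding V_products_def by blast
  then show "span (V_products K) \<subseteq> span {mul (map e is) | is. length is = n \<and> set is \<subseteq> K} \<inter> V"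
    using span_mono span_V_products_subset_V by blast
  have "mul (map e is) \<in> Jspace K" if "length is = n" "set is \<subseteq> K" for "is"
  proof (rule mul_in_Jspace_if_basis_slot)
    show "length (map e is) = n" "0 < n" using that(1) n_ge_2 by simp_all
    then show "map e is ! 0 = e (is ! 0)" "is ! 0 \<in> K"
      using that by (simp_all add: nth_mem subsetD)
  qed
  then have "{mul (map e is) | is. length is = n \<and> set is \<subseteq> K} \<subseteq> Jspace K"
    by blast
  then have products: "span {mul (map e is) | is. length is = n \<and> set is \<subseteq> K} \<subseteq> Jspace K"
    by (intro span_minimal subspace_Jspace)
  show "span {mul (map e is) | is. length is = n \<and> set is \<subseteq> K} \<inter> V \<subseteq> span (V_products K)"
  proof
    fix x assume x: "x \<in> span {mul (map e is) | is. length is = n \<and> set is \<subseteq> K} \<inter> V"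
    then obtain a b where ab: "a \<in> span (V_products K)" "b \<in> span (e ` K)" "x = a + b"
      using products unfolding Jspace_eq_setsum setsum_def by blast
    have "b \<in> V"
      using x ab span_V_products_subset_V subspace_V subspace_diff[of V x a] by auto
    moreover have "b \<in> W"
      using ab(2) span_mono[of "e ` K" "e ` I"] K_subset_I span_basis by blast
    ultimately have "b = 0" using V_inter_W by blast
    then show "x \<in> span (V_products K)" using ab by simp
  qed
qed

lemma inherited_qmb_Jspace:
  assumes "K \<noteq> {}"
  shows "inherited_qmb scale Lg V W I e (Jspace K)"
  unfolding inherited_qmb_def
proof (intro exI conjI)
  show "graded_subspace scale Lg (span (V_products K))"
    using mul_basis_homogeneous K_subset_I
    by (intro graded_subspace_span) (auto simp: V_products_def)
  show "graded_subspace scale Lg (span (e ` K))"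
    using basis_homogeneous K_subset_I by (intro graded_subspace_span) auto
  show "span (e ` K) \<subseteq> W"
    using span_mono[of "e ` K" "e ` I"] K_subset_I span_basis by blast
  obtain k where "k \<in> K" using assms by blast
  then show "span (e ` K) \<noteq> {0}"
    using K_subset_I basis_nonzero span_base[of "e k" "e ` K"] by blast
  show "independent (e ` K)"
    using independent_mono[OF independent_basis] K_subset_I by blast
  show "span (V_products K) \<inter> span (e ` K) = {0}"
    using span_V_products_subset_V \<open>span (e ` K) \<subseteq> W\<close> V_inter_W span_zero by blast
qed (simp_all add: K_subset_I span_V_products_subset_V Jspace_eq_setsum)

end

end

theorem proposition3p8:
  fixes scale :: "'f::field \<Rightarrow> 'v::ab_group_add \<Rightarrow> 'v"
    and Lg :: "'g::ab_group_add \<Rightarrow> 'v set"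
    and n :: nat
    and mul :: "'v list \<Rightarrow> 'v"
    and eps :: "'g \<Rightarrow> 'g \<Rightarrow> 'f"
    and alpha :: "nat \<Rightarrow> nat \<Rightarrow> nat \<Rightarrow> (nat \<Rightarrow> nat) \<Rightarrow> (nat \<Rightarrow> nat) \<Rightarrow> 'f"
    and V W :: "'v set"
    and I :: "'i set"
    and e :: "'i \<Rightarrow> 'v"
    and i :: 'i
  assumes "vector_space scale"
    and "n \<ge> 2"
    and "bicharacter eps"
    and "color_gLt_algebra scale Lg n mul eps alpha"
    and "qm_basis scale Lg n mul V W I e"
    and "i \<in> I"
  shows "color_gLt_ideal scale Lg n mul (Jcls scale mul n V I e i) \<and>
         inherited_qmb scale Lg V W I e (Jcls scale mul n V I e i)"
proof -
  interpret qm_color_gLt_algebra scale Lg n mul eps alpha V W I e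
    using assms by (simp add: qm_color_gLt_algebra_def qm_color_gLt_algebra_axioms_def)
  let ?K = "cls scale mul n V I e i"
  have closed: "mu_closed ?K" by (rule mu_closed_cls)
  have "?K \<noteq> {}" using assms(6) by (auto simp: cls_def connected_def)
  moreover have "Jcls scale mul n V I e i = Jspace ?K"
    unfolding Jcls_def Vcls_def Wcls_def span_products_inter_V[OF closed] Jspace_eq_setsum ..
  ultimately show ?thesis
    using color_gLt_ideal_Jspace[OF closed] inherited_qmb_Jspace[OF closed] by simp
qed

end
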